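(* Let $n_1,n_2$ be coprime positive integers with $n_2<n_1$ and $n_1>1$, and let $r_0$ be a real number with $0\le r_0<1$. Define $a_0,\dots,a_L$, $n_1,\dots,n_{L+2}$, $b_0,b_1,\dots$, $r_0,r_1,\dots$ and $d_i$ as in the context. Let $k$ be a positive integer with $k<L$, and assume $a_i=b_i$ for all $0\le i\le k$. Then: (i) if $k<L-1$ and $|d_k|<\frac{1}{n_{k+1}(n_{k+1}-1)}$, then $a_{k+1}=b_{k+1}$; (ii) if $k=L-1$ and $|d_{L-1}|<\frac{1}{n_L(n_L+1)}$, then $a_L=b_L$ or $a_L-1=b_L$.
   Context: Expansion of $n_2/n_1$ (Euclidean algorithm): set $a_0=0$ and, for $i=1,2,\dots$, $a_i=\lfloor n_i/n_{i+1}\rfloor$ and $n_{i+2}=n_i-a_in_{i+1}$, stopping at the index $L$ with $n_{L+2}=0$; then $n_{L+1}=1$ (by coprimality), $n_L=a_L\ge 2$, and $n_2/n_1=[0,a_1,\dots,a_L]$, i.e. $\frac{n_i}{n_{i+1}}=a_i+\frac{n_{i+2}}{n_{i+1}}$ for $1\le i\le L$. Expansion of $r_0$: set $b_0=\lfloor r_0\rfloor=0$ and, for $i\ge1$, as long as $r_{i-1}\neq0$, $b_i=\lfloor 1/r_{i-1}\rfloor$ and $r_i=1/r_{i-1}-b_i$ (so $\frac{1}{r_{i-1}}=b_i+r_i$ with $0\le r_i<1$). For each index $i\le L$ for which $r_i$ is defined, set $d_i=r_i-\frac{n_{i+2}}{n_{i+1}}$. (The conclusion includes that the relevant $b_{k+1}$,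 resp. $b_L$, is defined.) *)

theory Defs
  imports Complex_Main
begin

text \<open>Euclidean algorithm on n1, n2: eu_pair n1 n2 i = (n_(i+1), n_(i+2)).\<close>
fun eu_pair :: "nat \<Rightarrow> nat \<Rightarrow> nat \<Rightarrow> nat \<times> nat" where
  "eu_pair n1 n2 0 = (n1, n2)"
| "eu_pair n1 n2 (Suc i) = (case eu_pair n1 n2 i of (x, y) \<Rightarrow> (y, x mod y))"

text \<open>n_i for i >= 1 (n_0 is not used by the paper; set to 0).\<close>
definition eun :: "nat \<Rightarrow> nat \<Rightarrow> nat \<Rightarrow> nat" where
  "eun n1 n2 i = (if i = 0 then 0 else fst (eu_pair n1 n2 (i - 1)))"

definition cf_a :: "nat \<Rightarrow> nat \<Rightarrow> nat \<Rightarrow> nat" where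
  "cf_a n1 n2 i = (if i = 0 then 0 else eun n1 n2 i div eun n1 n2 (i + 1))"

definition cf_L :: "nat \<Rightarrow> nat \<Rightarrow> nat" where
  "cf_L n1 n2 = (LEAST l. 1 \<le> l \<and> eun n1 n2 (l + 2) = 0)"

fun cf_r :: "real \<Rightarrow> nat \<Rightarrow> real" where
  "cf_r r0 0 = r0"
| "cf_r r0 (Suc i) = 1 / cf_r r0 i - of_int \<lfloor>1 / cf_r r0 i\<rfloor>"

text \<open>b_i (and r_i) is defined iff r_0, ..., r_(i-1) are all nonzero.\<close>
definition cf_defined :: "real \<Rightarrow> nat \<Rightarrow> bool" where
  "cf_defined r0 i = (\<forall>j<i. cf_r r0 j \<noteq> 0)"

definition cf_b :: "real \<Rightarrow> nat \<Rightarrow> int" where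
  "cf_b r0 i = (if i = 0 then \<lfloor>r0\<rfloor> else \<lfloor>1 / cf_r r0 (i - 1)\<rfloor>)"

definition cf_d :: "nat \<Rightarrow> nat \<Rightarrow> real \<Rightarrow> nat \<Rightarrow> real" where
  "cf_d n1 n2 r0 i = cf_r r0 i - real (eun n1 n2 (i + 2)) / real (eun n1 n2 (i + 1))"

end

theory Submission imports Defs begin

text \<open>Both parts say that 1/r_k lands in the right integer interval. By the recursion,
  n_(k+1)/n_(k+2) = a_(k+1) + n_(k+3)/n_(k+2), so the rational n_(k+2)/n_(k+1) lies strictly
  inside the interval (1/(a_(k+1)+1), 1/a_(k+1)), at distance at least 1/(n_(k+1)(a_(k+1)+1))
  from its left and 1/(n_(k+1) a_(k+1)) from its right end point; as a_(k+1) < n_(k+1) - 1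
  the bound on d_k keeps r_k inside as well. At the last step n_(L+1) = 1 by coprimality, the
  rational is 1/a_L itself, and r_k is only known to lie in (1/(a_L+1), 1/(a_L-1)).\<close>

lemma eun_one [simp]: "eun n1 n2 1 = n1"
  and eun_two [simp]: "eun n1 n2 2 = n2"
  by (simp_all add: eun_def numeral_2_eq_2)

lemma eun_mod_step: "1 \<le> i \<Longrightarrow> eun n1 n2 (i + 2) = eun n1 n2 i mod eun n1 n2 (i + 1)"
  by (cases i) (simp_all add: eun_def split: prod.splits)

lemma gcd_eun: "1 \<le> i \<Longrightarrow> gcd (eun n1 n2 i) (eun n1 n2 (i + 1)) = gcd n1 n2"
proof (induction i rule: nat_induct_at_least)
  case base
  then show ?case by (simp add: eun_def)
next
  case (Suc i)
  have "gcd (eun n1 n2 (Suc i)) (eun n1 n2 (Suc i + 1))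
      = gcd (eun n1 n2 (i + 1)) (eun n1 n2 i mod eun n1 n2 (i + 1))"
    using eun_mod_step[OF Suc.hyps, of n1 n2] by simp
  also have "\<dots> = gcd (eun n1 n2 i) (eun n1 n2 (i + 1))"
    by (metis gcd_red_nat)
  finally show ?case using Suc.IH by simp
qed

lemma eun_terminates:
  assumes "0 < n2"
  shows "\<exists>l. 1 \<le> l \<and> eun n1 n2 (l + 2) = 0"
proof (rule ccontr)
  assume "\<nexists>l. 1 \<le> l \<and> eun n1 n2 (l + 2) = 0"
  then have nonzero: "eun n1 n2 (l + 2) \<noteq> 0" if "1 \<le> l" for l
    using that by auto
  have "eun n1 n2 (i + 3) + i < n2" for i
  proof (induction i)
    case 0
    have "eun n1 n2 3 = n1 mod n2"
      by (simp add: eun_def numeral_3_eq_3)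
    then show ?case
      using assms by simp
  next
    case (Suc i)
    have "eun n1 n2 (Suc i + 3) = eun n1 n2 (i + 2) mod eun n1 n2 (i + 2 + 1)"
      using eun_mod_step[of "i + 2" n1 n2] by (simp add: eval_nat_numeral)
    also have "\<dots> < eun n1 n2 (i + 3)"
      using nonzero[of "i + 1"] by (simp add: eval_nat_numeral)
    finally show ?case
      using Suc.IH by simp
  qed
  from this[of n2] show False
    by simp
qed

lemma
  assumes "0 < n2"
  shows cf_L_ge_1: "1 \<le> cf_L n1 n2"
    and eun_cf_L_add_2: "eun n1 n2 (cf_L n1 n2 + 2) = 0"
  using LeastI_ex[OF eun_terminates[OF assms]] unfolding cf_L_def by simp_all

lemma eun_pos:
  assumes "0 < n2" "n2 < n1" "1 \<le> i" "i \<le> cf_L n1 n2 + 1"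
  shows "0 < eun n1 n2 i"
proof (cases "i \<le> 2")
  case True
  then have "i = 1 \<or> i = 2" using assms(3) by auto
  then show ?thesis using assms(1,2) by (auto simp: eun_def)
next
  case False
  then obtain j where j: "i = j + 2" "1 \<le> j"
    by (intro that[of "i - 2"]) auto
  then show ?thesis
    using not_less_Least[of j "\<lambda>l. 1 \<le> l \<and> eun n1 n2 (l + 2) = 0"] assms(4)
    unfolding cf_L_def by auto
qed

lemma eun_decreasing:
  assumes "0 < n2" "n2 < n1" "1 \<le> i" "i \<le> cf_L n1 n2"
  shows "eun n1 n2 (i + 2) < eun n1 n2 (i + 1)"
  using eun_mod_step[OF assms(3), of n1 n2] eun_pos[OF assms(1,2), of "i + 1"] assms(4) by simp

lemma eun_cf_L_add_1:
  assumes "coprime n1 n2" "0 < n2"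
  shows "eun n1 n2 (cf_L n1 n2 + 1) = 1"
proof -
  let ?L = "cf_L n1 n2"
  have "eun n1 n2 ?L mod eun n1 n2 (?L + 1) = 0"
    using eun_mod_step[OF cf_L_ge_1] eun_cf_L_add_2 assms(2) by metis
  then have "eun n1 n2 (?L + 1) dvd eun n1 n2 ?L" by auto
  moreover have "gcd (eun n1 n2 ?L) (eun n1 n2 (?L + 1)) = 1"
    using gcd_eun[OF cf_L_ge_1[OF assms(2)]] assms(1) by simp
  ultimately show ?thesis by (metis gcd.commute gcd_nat.absorb1)
qed

lemma inverse_bounds:
  fixes r x y :: real
  assumes "0 < x" "0 < y" "1 / y < r" "r < 1 / x"
  shows "0 < r" "x < 1 / r" "1 / r < y"
proof -
  show "0 < r"
    using assms(2,3) by (meson less_trans zero_less_divide_1_iff)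
  then show "x < 1 / r" "1 / r < y"
    using assms by (simp_all add: field_simps)
qed

lemma floor_inverse_eq_div_if_close:
  fixes p q :: nat and r :: real
  assumes "0 < p" "p < q" "0 < q mod p"
    and close: "\<bar>r - p / q\<bar> < 1 / (real q * (real q - 1))"
  shows "0 < r" "\<lfloor>1 / r\<rfloor> = int (q div p)"
proof -
  define a s where "a = q div p" and "s = q mod p"
  have q_eq: "q = a * p + s"
    unfolding a_def s_def by simp
  then have q_eq_real: "real q = real a * real p + real s"
    by simp
  have "1 \<le> a" "s < p" "0 < s"
    using assms(1-3) unfolding a_def s_def by (auto simp: Suc_le_eq div_greater_zero_iff)
  then have "a * 2 \<le> a * p"
    by simp
  then have "a + 2 \<le> q"
    using q_eq \<open>1 \<le> a\<close> \<open>0 < s\<close> by linarith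
  then have q_ge: "real a + 2 \<le> real q"
    by linarith
  then have q_gt: "real a + 1 < real q"
    by linarith
  have eps_le: "1 / (real q * (real q - 1)) \<le> 1 / (real q * (real a + 1))"
    using q_ge q_gt by (intro divide_left_mono mult_left_mono mult_pos_pos) auto
  have "1 / (real a + 1) + 1 / (real q * (real a + 1)) \<le> p / q"
  proof -
    have "p / q - 1 / (real a + 1) = (real p - real s) / (real q * (real a + 1))"
      using q_gt q_eq_real by (simp add: field_simps)
    moreover have "1 / (real q * (real a + 1)) \<le> (real p - real s) / (real q * (real a + 1))"
      using \<open>s < p\<close> q_gt by (intro divide_right_mono) auto
    ultimately show ?thesis by linarith
  qed
  then have lower: "1 / (real a + 1) < r"
    using close eps_le by (simp add: abs_less_iff)
  have "p / q + 1 / (real q * real a) \<le> 1 / real a"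
  proof -
    have "1 / real a - p / q = real s / (real q * real a)"
      using q_gt q_eq_real \<open>1 \<le> a\<close> by (simp add: field_simps)
    moreover have "1 / (real q * real a) \<le> real s / (real q * real a)"
      using \<open>0 < s\<close> q_gt \<open>1 \<le> a\<close> by (intro divide_right_mono) auto
    ultimately show ?thesis by linarith
  qed
  moreover have "1 / (real q * (real q - 1)) \<le> 1 / (real q * real a)"
    using q_gt \<open>1 \<le> a\<close> by (intro divide_left_mono mult_left_mono mult_pos_pos) auto
  ultimately have upper: "r < 1 / real a"
    using close by (simp add: abs_less_iff)
  have "0 < real a"
    using \<open>1 \<le> a\<close> by simp
  from inverse_bounds[OF this _ lower upper] show "0 < r" "\<lfloor>1 / r\<rfloor> = int (q div p)"
    unfolding a_def by (simp_all add: floor_eq_iff)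
qed

lemma floor_inverse_near_if_close:
  fixes q :: nat and r :: real
  assumes "2 \<le> q" and close: "\<bar>r - 1 / q\<bar> < 1 / (real q * (real q + 1))"
  shows "0 < r" "\<lfloor>1 / r\<rfloor> = int q \<or> \<lfloor>1 / r\<rfloor> = int q - 1"
proof -
  have q_ge: "2 \<le> real q"
    using assms(1) by simp
  have "1 / (real q + 1) + 1 / (real q * (real q + 1)) = 1 / q"
    using q_ge by (simp add: field_simps add_nonneg_eq_0_iff)
  then have lower: "1 / (real q + 1) < r"
    using close by (simp add: abs_less_iff)
  have "1 / q + 1 / (real q * (real q + 1)) = (real q + 2) / (real q * (real q + 1))"
    using q_ge by (simp add: field_simps add_nonneg_eq_0_iff)
  also have "\<dots> \<le> 1 / (real q - 1)"
  proof -
    have "(real q + 2) * (real q - 1) \<le> real q * (real q + 1)"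
      by (simp add: algebra_simps)
    then show ?thesis
      using q_ge by (simp add: divide_simps)
  qed
  finally have upper: "r < 1 / (real q - 1)"
    using close by (simp add: abs_less_iff)
  have "0 < real q - 1"
    using q_ge by simp
  from inverse_bounds[OF this _ lower upper]
  have "0 < r" "int q - 1 \<le> \<lfloor>1 / r\<rfloor>" "\<lfloor>1 / r\<rfloor> \<le> int q"
    by (simp_all add: le_floor_iff floor_le_iff)
  then show "0 < r" "\<lfloor>1 / r\<rfloor> = int q \<or> \<lfloor>1 / r\<rfloor> = int q - 1"
    by auto
qed

lemma floor_inverse_cf_r_eq_cf_a:
  assumes "0 < n2" "n2 < n1" "0 < k" "k + 1 < cf_L n1 n2"
    and "\<bar>cf_d n1 n2 r0 k\<bar> < 1 / (real (eun n1 n2 (k + 1)) * (real (eun n1 n2 (k + 1)) - 1))"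
  shows "0 < cf_r r0 k" "\<lfloor>1 / cf_r r0 k\<rfloor> = int (cf_a n1 n2 (k + 1))"
proof -
  define p q where "p = eun n1 n2 (k + 2)" and "q = eun n1 n2 (k + 1)"
  have "0 < p"
    unfolding p_def using eun_pos[OF assms(1,2)] assms(4) by simp
  moreover have "p < q"
    unfolding p_def q_def using eun_decreasing[OF assms(1,2)] assms(3,4) by simp
  moreover have "0 < q mod p"
    using eun_mod_step[of "k + 1" n1 n2] eun_pos[OF assms(1,2), of "k + 3"] assms(4)
    unfolding p_def q_def by (simp add: numeral_eq_Suc)
  moreover have "\<bar>cf_r r0 k - p / q\<bar> < 1 / (real q * (real q - 1))"
    using assms(5) unfolding cf_d_def p_def q_def by simp
  ultimately show "0 < cf_r r0 k" "\<lfloor>1 / cf_r r0 k\<rfloor> = int (cf_a n1 n2 (k + 1))"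
    using floor_inverse_eq_div_if_close[of p q "cf_r r0 k"] unfolding cf_a_def p_def q_def
    by simp_all
qed

lemma floor_inverse_cf_r_near_last_cf_a:
  assumes "coprime n1 n2" "0 < n2" "n2 < n1" "0 < k" "k + 1 = cf_L n1 n2"
    and "\<bar>cf_d n1 n2 r0 k\<bar> < 1 / (real (eun n1 n2 (k + 1)) * (real (eun n1 n2 (k + 1)) + 1))"
  shows "0 < cf_r r0 k"
    "\<lfloor>1 / cf_r r0 k\<rfloor> = int (cf_a n1 n2 (k + 1)) \<or>
     \<lfloor>1 / cf_r r0 k\<rfloor> = int (cf_a n1 n2 (k + 1)) - 1"
proof -
  define q where "q = eun n1 n2 (k + 1)"
  have last: "eun n1 n2 (k + 2) = 1"
    using eun_cf_L_add_1[OF assms(1,2)] assms(5) by (simp add: numeral_eq_Suc)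
  then have "2 \<le> q"
    unfolding q_def using eun_decreasing[OF assms(2,3), of k] assms(4,5) by simp
  moreover have "\<bar>cf_r r0 k - 1 / q\<bar> < 1 / (real q * (real q + 1))"
    using assms(6) last unfolding cf_d_def q_def by simp
  ultimately show "0 < cf_r r0 k"
    "\<lfloor>1 / cf_r r0 k\<rfloor> = int (cf_a n1 n2 (k + 1)) \<or>
     \<lfloor>1 / cf_r r0 k\<rfloor> = int (cf_a n1 n2 (k + 1)) - 1"
    using floor_inverse_near_if_close[of q "cf_r r0 k"] last unfolding cf_a_def q_def
    by simp_all
qed

theorem lemma2:
  fixes n1 n2 k :: nat and r0 :: real
  assumes "coprime n1 n2" and "0 < n2" and "n2 < n1" and "1 < n1"
    and "0 \<le> r0" and "r0 < 1"
    and "0 < k" and "k < cf_L n1 n2"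
    and "\<forall>i\<le>k. cf_defined r0 i \<and> int (cf_a n1 n2 i) = cf_b r0 i"
  shows "(k < cf_L n1 n2 - 1 \<and>
          \<bar>cf_d n1 n2 r0 k\<bar> < 1 / (real (eun n1 n2 (k + 1)) * (real (eun n1 n2 (k + 1)) - 1))
          \<longrightarrow> cf_defined r0 (k + 1) \<and> int (cf_a n1 n2 (k + 1)) = cf_b r0 (k + 1))
       \<and> (k = cf_L n1 n2 - 1 \<and>
          \<bar>cf_d n1 n2 r0 (cf_L n1 n2 - 1)\<bar>
            < 1 / (real (eun n1 n2 (cf_L n1 n2)) * (real (eun n1 n2 (cf_L n1 n2)) + 1))
          \<longrightarrow> cf_defined r0 (cf_L n1 n2) \<and>
              (int (cf_a n1 n2 (cf_L n1 n2)) = cf_b r0 (cf_L n1 n2) \<or>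
               int (cf_a n1 n2 (cf_L n1 n2)) - 1 = cf_b r0 (cf_L n1 n2)))"
proof -
  \<comment> \<open>Of the hypothesis a_i = b_i only the definedness of r_0, ..., r_k is needed:
    b_(k+1) depends on r_k alone.\<close>
  have defined: "cf_defined r0 (k + 1) \<longleftrightarrow> cf_r r0 k \<noteq> 0"
    using assms(9) unfolding cf_defined_def by (auto simp: less_Suc_eq)
  have b: "cf_b r0 (k + 1) = \<lfloor>1 / cf_r r0 k\<rfloor>"
    by (simp add: cf_b_def)
  show ?thesis
  proof (rule conjI; intro impI; elim conjE)
    assume "k < cf_L n1 n2 - 1"
      and close: "\<bar>cf_d n1 n2 r0 k\<bar>
        < 1 / (real (eun n1 n2 (k + 1)) * (real (eun n1 n2 (k + 1)) - 1))"
    then have "k + 1 < cf_L n1 n2"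
      by linarith
    from floor_inverse_cf_r_eq_cf_a[OF assms(2,3,7) this close]
    show "cf_defined r0 (k + 1) \<and> int (cf_a n1 n2 (k + 1)) = cf_b r0 (k + 1)"
      using defined b by simp
  next
    assume "k = cf_L n1 n2 - 1"
    then have L: "cf_L n1 n2 = k + 1"
      using assms(8) by simp
    assume "\<bar>cf_d n1 n2 r0 (cf_L n1 n2 - 1)\<bar>
      < 1 / (real (eun n1 n2 (cf_L n1 n2)) * (real (eun n1 n2 (cf_L n1 n2)) + 1))"
    then have "\<bar>cf_d n1 n2 r0 k\<bar>
      < 1 / (real (eun n1 n2 (k + 1)) * (real (eun n1 n2 (k + 1)) + 1))"
      unfolding L by simp
    from floor_inverse_cf_r_near_last_cf_a[OF assms(1-3,7) L[symmetric] this]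
    show "cf_defined r0 (cf_L n1 n2) \<and>
      (int (cf_a n1 n2 (cf_L n1 n2)) = cf_b r0 (cf_L n1 n2) \<or>
       int (cf_a n1 n2 (cf_L n1 n2)) - 1 = cf_b r0 (cf_L n1 n2))"
      using defined b unfolding L by auto
  qed
qed

end
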